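(* For every integer $n>2$, the number of triples $(x,y,z)\in\{1,\dots,n\}^3$ with $x<y<z$ and $\gcd(y-x,\,z-y,\,n)=1$ equals $\frac{n}{6}J_2(n)-\frac{n}{2}J_1(n)$.
   Context: Jordan's totient function of order $k\ge1$ is $J_k(n)=n^k\prod_{p\mid n,\ p\text{ prime}}\left(1-p^{-k}\right)$; in particular $J_1=\varphi$ is Euler's totient function. *)

theory Defs
  imports "HOL-Number_Theory.Number_Theory"
begin

definition jordan_totient :: "nat \<Rightarrow> nat \<Rightarrow> real" where
  "jordan_totient k n = real n ^ k * (\<Prod>p\<in>prime_factors n. (1 - 1 / real p ^ k))"

end

theory Submission
  imports Defs
begin

text \<open>
  Let \<open>C g n\<close> be the set of triples \<open>1 \<le> x < y < z \<le> n\<close> with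
  \<open>gcd (y - x, z - y, n) = g\<close>.  The proof has three parts.

  A triple is determined by its first entry \<open>x\<close> and its gaps
  \<open>a = y - x\<close>, \<open>b = z - y\<close>, so \<open>|C g n|\<close> is the sum of \<open>n - a - b\<close> over admissible gap
  pairs.  For \<open>n = g m\<close> the admissible gap pairs are exactly \<open>g\<close> times those of
  \<open>C 1 m\<close>, whence \<open>|C g n| = g |C 1 (n/g)|\<close>.  Partitioning all \<open>binomial n 3\<close> triples by
  the value of the gcd gives \<open>\<Sum>d|n. (n/d) |C 1 d| = n(n-1)(n-2)/6\<close>.

  (2) Jordan's totient.  \<open>J_k\<close> is multiplicative and \<open>\<Sum>d|n. J_k d = n^k\<close>; hence the
  function \<open>d/6 J_2 d - d/2 J_1 d + [d = 1]/3\<close> satisfies the same divisor identity.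

  Dirichlet convolution with a kernel \<open>h\<close> with \<open>h 1 \<noteq> 0\<close> is
  injective, so \<open>|C 1 n|\<close> equals that function; for \<open>n > 2\<close> the correction term
  vanishes and the theorem follows.
\<close>

lemma jordan_totient_1 [simp]: "jordan_totient k (Suc 0) = 1"
  by (simp add: jordan_totient_def)

lemma jordan_totient_mult_coprime:
  assumes "coprime a b"
  shows "jordan_totient k (a * b) = jordan_totient k a * jordan_totient k b"
proof (cases "a = 0 \<or> b = 0")
  case True
  then show ?thesis using assms by auto
next
  case False
  have "prime_factors a \<inter> prime_factors b = {}"
    using assms by (auto simp: in_prime_factors_iff dest: coprime_common_divisor_nat[of a b])
  moreover have "prime_factors (a * b) = prime_factors a \<union> prime_factors b"
    using False by (simp add: prime_factors_product)
  ultimately show ?thesis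
    by (simp add: jordan_totient_def prod.union_disjoint power_mult_distrib)
qed

(* On prime powers: J_k(p^(i+1)) = p^((i+1)k) - p^(ik); this makes the divisor sum telescope. *)
lemma jordan_totient_prime_power_Suc:
  assumes "prime p"
  shows "jordan_totient k (p ^ Suc i) = real p ^ (Suc i * k) - real p ^ (i * k)"
proof -
  have "prime_factors (p ^ Suc i) = {p}"
    using assms prime_factors_power[of "Suc i" p] by (simp add: prime_prime_factors)
  moreover have "real p ^ k \<noteq> 0" using prime_gt_0_nat[OF assms] by simp
  ultimately show ?thesis
    by (simp add: jordan_totient_def power_add power_mult field_simps)
qed

lemma jordan_totient_divisor_sum_prime_power:
  assumes "prime p"
  shows "(\<Sum>d | d dvd p ^ e. jordan_totient k d) = real p ^ (e * k)"
proof -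
  have "{d. d dvd p ^ e} = (\<lambda>i. p ^ i) ` {..e}"
    using divides_primepow_nat[OF assms] by auto
  moreover have "inj_on (\<lambda>i. p ^ i) {..e}"
    using prime_gt_1_nat[OF assms] by (auto simp: inj_on_def)
  moreover have "(\<Sum>i\<le>e. jordan_totient k (p ^ i)) = real p ^ (e * k)"
  proof (induction e)
    case (Suc e)
    then show ?case using jordan_totient_prime_power_Suc[OF assms, of k e] by simp
  qed simp
  ultimately show ?thesis by (simp add: sum.reindex)
qed

lemma gcd_mult_divisors_coprime:
  fixes a b d1 d2 :: nat
  assumes "coprime a b" "d1 dvd a" "d2 dvd b"
  shows "gcd (d1 * d2) a = d1" "gcd (d1 * d2) b = d2"
proof -
  have "coprime a d2" using coprime_divisors[OF dvd_refl assms(3) assms(1)] .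
  then show "gcd (d1 * d2) a = d1"
    using gcd_mult_left_right_cancel[of a d2 d1] assms(2) by (simp add: gcd_nat.absorb1)
  have "coprime b d1" using coprime_divisors[OF assms(2) dvd_refl assms(1)] by (simp add: coprime_commute)
  then show "gcd (d1 * d2) b = d2"
    using gcd_mult_left_left_cancel[of b d1 d2] assms(3) by (simp add: gcd_nat.absorb1)
qed

lemma divisor_sum_mult_coprime:
  fixes f :: "nat \<Rightarrow> 'a::comm_semiring_1"
  assumes f_mult: "\<And>x y. coprime x y \<Longrightarrow> f (x * y) = f x * f y"
    and ab: "coprime a b" "a > 0" "b > 0"
  shows "(\<Sum>d | d dvd a * b. f d) = (\<Sum>d | d dvd a. f d) * (\<Sum>d | d dvd b. f d)"
proof -
  have "(\<Sum>d | d dvd a. f d) * (\<Sum>d | d dvd b. f d) =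
        (\<Sum>(d1, d2) \<in> {d. d dvd a} \<times> {d. d dvd b}. f d1 * f d2)"
    using ab by (simp add: sum_product sum.cartesian_product)
  also have "\<dots> = (\<Sum>(d1, d2) \<in> {d. d dvd a} \<times> {d. d dvd b}. f (d1 * d2))"
    using ab(1) by (intro sum.cong refl) (auto simp: f_mult coprime_divisors)
  also have "\<dots> = (\<Sum>d | d dvd a * b. f d)"
  proof (rule sum.reindex_bij_witness[of _ "\<lambda>d. (gcd d a, gcd d b)" "\<lambda>(d1, d2). d1 * d2"])
    fix d assume "d \<in> {d. d dvd a * b}"
    then obtain d1 d2 where "d = d1 * d2" "d1 dvd a" "d2 dvd b"
      using division_decomp by blast
    then show "(\<lambda>(d1, d2). d1 * d2) (gcd d a, gcd d b) = d"
      using gcd_mult_divisors_coprime[OF ab(1)] by simp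
  qed (auto simp: gcd_mult_divisors_coprime[OF ab(1)] mult_dvd_mono)
  finally show ?thesis ..
qed

(* The classical identity sum_{d | n} J_k(d) = n^k, by splitting off a maximal prime power. *)
lemma jordan_totient_divisor_sum:
  assumes "n > 0"
  shows "(\<Sum>d | d dvd n. jordan_totient k d) = real n ^ k"
  using assms
proof (induction n rule: less_induct)
  case (less n)
  show ?case
  proof (cases "n = 1")
    case True
    then show ?thesis by simp
  next
    case False
    obtain p where p: "prime p" "p dvd n" using prime_factor_nat[OF False] by blast
    define e where "e = multiplicity p n"
    obtain m where n: "n = p ^ e * m" and "\<not> p dvd m"
      by (rule multiplicity_decompose'[of n p, folded e_def])
        (use less.prems p in \<open>auto simp: not_prime_unit\<close>)
    have "e > 0" using p less.prems by (simp add: e_def prime_multiplicity_gt_zero_iff)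
    then have "p ^ e > 1" using one_less_power prime_gt_1_nat[OF p(1)] by blast
    moreover have "m > 0" using n less.prems by (cases m) auto
    ultimately have "m < n" using n by simp
    have "coprime (p ^ e) m" using p \<open>\<not> p dvd m\<close> by (simp add: prime_imp_coprime_nat)
    then have "(\<Sum>d | d dvd n. jordan_totient k d) =
               (\<Sum>d | d dvd p ^ e. jordan_totient k d) * (\<Sum>d | d dvd m. jordan_totient k d)"
      unfolding n using \<open>m > 0\<close> p(1)
      by (intro divisor_sum_mult_coprime jordan_totient_mult_coprime) (auto simp: prime_gt_0_nat)
    also have "\<dots> = real p ^ (e * k) * real m ^ k"
      using jordan_totient_divisor_sum_prime_power[OF p(1)] less.IH[OF \<open>m < n\<close> \<open>m > 0\<close>] by simp
    also have "\<dots> = real n ^ k" using n by (simp add: power_mult power_mult_distrib)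
    finally show ?thesis .
  qed
qed

(* Dirichlet convolution with a kernel h satisfying h 1 \<noteq> 0 is injective: the term d = n
   determines F n from the values at proper divisors (strong induction on n). *)
lemma divisor_convolution_cancel:
  fixes F G h :: "nat \<Rightarrow> 'a::idom"
  assumes h1: "h 1 \<noteq> 0"
    and conv: "\<And>m. m > 0 \<Longrightarrow>
      (\<Sum>d | d dvd m. h (m div d) * F d) = (\<Sum>d | d dvd m. h (m div d) * G d)"
    and "n > 0"
  shows "F n = G n"
  using \<open>n > 0\<close>
proof (induction n rule: less_induct)
  case (less n)
  let ?D = "{d. d dvd n} - {n}"
  have fin: "finite {d. d dvd n}" and "n \<in> {d. d dvd n}" using less.prems by simp_all
  have "(\<Sum>d\<in>?D. h (n div d) * F d) = (\<Sum>d\<in>?D. h (n div d) * G d)"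
  proof (intro sum.cong refl)
    fix d assume "d \<in> ?D"
    then have "d < n" "d > 0" using less.prems by (auto dest: dvd_imp_le intro: Nat.gr0I)
    then show "h (n div d) * F d = h (n div d) * G d" using less.IH by simp
  qed
  moreover have "h 1 * F n + (\<Sum>d\<in>?D. h (n div d) * F d) = h 1 * G n + (\<Sum>d\<in>?D. h (n div d) * G d)"
    using conv[OF less.prems] less.prems
      sum.remove[OF fin \<open>n \<in> _\<close>, of "\<lambda>d. h (n div d) * F d"]
      sum.remove[OF fin \<open>n \<in> _\<close>, of "\<lambda>d. h (n div d) * G d"] by simp
  ultimately show ?case using h1 by simp
qed

(* Increasing pairs and triples in {1..n}; gcd_triples g n is the set C g n of the overview,
   and gap_pairs g n collects the gap pairs (y - x, z - y) of its elements. *)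
definition increasing_pairs :: "nat \<Rightarrow> (nat \<times> nat) set" where
  "increasing_pairs n = {(x, y). x \<in> {1..n} \<and> y \<in> {1..n} \<and> x < y}"

definition increasing_triples :: "nat \<Rightarrow> (nat \<times> nat \<times> nat) set" where
  "increasing_triples n =
     {(x, y, z). x \<in> {1..n} \<and> y \<in> {1..n} \<and> z \<in> {1..n} \<and> x < y \<and> y < z}"

definition gcd_triples :: "nat \<Rightarrow> nat \<Rightarrow> (nat \<times> nat \<times> nat) set" where
  "gcd_triples g n = {(x, y, z) \<in> increasing_triples n. gcd (gcd (y - x) (z - y)) n = g}"

definition gap_pairs :: "nat \<Rightarrow> nat \<Rightarrow> (nat \<times> nat) set" where
  "gap_pairs g n = {(a, b). 0 < a \<and> 0 < b \<and> a + b < n \<and> gcd (gcd a b) n = g}"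

lemma finite_increasing_pairs: "finite (increasing_pairs n)"
  by (rule finite_subset[of _ "{1..n} \<times> {1..n}"]) (auto simp: increasing_pairs_def)

lemma finite_increasing_triples: "finite (increasing_triples n)"
  by (rule finite_subset[of _ "{1..n} \<times> {1..n} \<times> {1..n}"]) (auto simp: increasing_triples_def)

lemma finite_gcd_triples: "finite (gcd_triples g n)"
  by (rule finite_subset[OF _ finite_increasing_triples]) (auto simp: gcd_triples_def)

lemma card_increasing_pairs: "real (card (increasing_pairs n)) = real n * (real n - 1) / 2"
proof (induction n)
  case 0
  then show ?case by (simp add: increasing_pairs_def)
next
  case (Suc n)
  have "increasing_pairs (Suc n) = increasing_pairs n \<union> (\<lambda>x. (x, Suc n)) ` {1..n}"
    by (auto simp: increasing_pairs_def)
  moreover have "increasing_pairs n \<inter> (\<lambda>x. (x, Suc n)) ` {1..n} = {}"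
    by (auto simp: increasing_pairs_def)
  moreover have "card ((\<lambda>x. (x, Suc n)) ` {1..n}) = n"
    by (simp add: card_image inj_on_def)
  ultimately have "card (increasing_pairs (Suc n)) = card (increasing_pairs n) + n"
    by (simp add: card_Un_disjoint finite_increasing_pairs)
  then show ?case using Suc by (simp add: field_simps)
qed

lemma card_increasing_triples:
  "real (card (increasing_triples n)) = real n * (real n - 1) * (real n - 2) / 6"
proof (induction n)
  case 0
  have "increasing_triples 0 = {}" by (auto simp: increasing_triples_def)
  then show ?case by simp
next
  case (Suc n)
  let ?top = "(\<lambda>(x, y). (x, y, Suc n)) ` increasing_pairs n"
  have "increasing_triples (Suc n) = increasing_triples n \<union> ?top"
    by (auto simp: increasing_triples_def increasing_pairs_def image_iff le_Suc_eq)
  moreover have "increasing_triples n \<inter> ?top = {}"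
    by (auto simp: increasing_triples_def increasing_pairs_def)
  moreover have "card ?top = card (increasing_pairs n)"
    by (rule card_image) (auto simp: inj_on_def)
  ultimately have "card (increasing_triples (Suc n)) = card (increasing_triples n) + card (increasing_pairs n)"
    by (simp add: card_Un_disjoint finite_increasing_triples finite_increasing_pairs)
  then show ?case using Suc card_increasing_pairs[of n] by (simp add: field_simps)
qed

lemma finite_gap_pairs: "finite (gap_pairs g n)"
  by (rule finite_subset[of _ "{..<n} \<times> {..<n}"]) (auto simp: gap_pairs_def)

(* A triple is its first entry x together with its gap pair (a, b); given the gaps,
   x ranges over {1..n - (a + b)}. *)
lemma card_gcd_triples_gap_sum:
  "card (gcd_triples g n) = (\<Sum>(a, b) \<in> gap_pairs g n. n - (a + b))"
proof -
  let ?S = "Sigma (gap_pairs g n) (\<lambda>(a, b). {1..n - (a + b)})"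
  let ?emb = "\<lambda>((a, b), x). (x, x + a, x + a + b)"
  have "gcd_triples g n = ?emb ` ?S"
  proof (intro equalityI subsetI)
    fix t assume "t \<in> gcd_triples g n"
    then obtain x y z where t: "t = (x, y, z)" "1 \<le> x" "x < y" "y < z" "z \<le> n"
      and "gcd (gcd (y - x) (z - y)) n = g"
      by (auto simp: gcd_triples_def increasing_triples_def)
    then have "((y - x, z - y), x) \<in> ?S" by (auto simp: gap_pairs_def)
    moreover have "t = ?emb ((y - x, z - y), x)" using t by simp
    ultimately show "t \<in> ?emb ` ?S" by blast
  qed (auto simp: gcd_triples_def increasing_triples_def gap_pairs_def)
  moreover have "inj_on ?emb ?S" by (auto simp: inj_on_def)
  ultimately show ?thesis by (simp add: card_image card_SigmaI finite_gap_pairs case_prod_unfold)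
qed

lemma gap_pairs_scale:
  assumes "g > 0"
  shows "gap_pairs g (g * m) = (\<lambda>(a, b). (g * a, g * b)) ` gap_pairs 1 m"
proof (intro equalityI subsetI)
  fix p assume "p \<in> gap_pairs g (g * m)"
  then obtain a b where p: "p = (a, b)" "0 < a" "0 < b" "a + b < g * m"
    and gab: "gcd (gcd a b) (g * m) = g" by (auto simp: gap_pairs_def)
  have "g dvd a" "g dvd b" using gab by (metis gcd_dvd1 gcd_dvd2 dvd_trans)+
  then obtain a' b' where ab: "a = g * a'" "b = g * b'" by (auto elim!: dvdE)
  have "g * (a' + b') < g * m" using p(4) unfolding ab by (simp add: distrib_left)
  then have "(a', b') \<in> gap_pairs 1 m"
    using p gab assms unfolding ab by (auto simp: gap_pairs_def gcd_mult_distrib_nat[symmetric])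
  then show "p \<in> (\<lambda>(a, b). (g * a, g * b)) ` gap_pairs 1 m"
    by (rule rev_image_eqI) (simp add: p ab)
qed (use assms in \<open>auto simp: gap_pairs_def gcd_mult_distrib_nat[symmetric] simp flip: distrib_left\<close>)

(* Hence |C g (g m)| = g |C 1 m|: each scaled gap pair admits g times as many first entries. *)
lemma card_gcd_triples_scale:
  assumes "g > 0"
  shows "card (gcd_triples g (g * m)) = g * card (gcd_triples 1 m)"
proof -
  have "inj_on (\<lambda>(a, b). (g * a, g * b)) (gap_pairs 1 m)" using assms by (auto simp: inj_on_def)
  then have "card (gcd_triples g (g * m)) = (\<Sum>(a, b) \<in> gap_pairs 1 m. g * m - (g * a + g * b))"
    by (simp add: card_gcd_triples_gap_sum gap_pairs_scale[OF assms] sum.reindex case_prod_unfold)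
  also have "\<dots> = (\<Sum>(a, b) \<in> gap_pairs 1 m. g * (m - (a + b)))"
    by (simp add: diff_mult_distrib2 distrib_left)
  also have "\<dots> = g * card (gcd_triples 1 m)"
    by (simp add: card_gcd_triples_gap_sum sum_distrib_left case_prod_unfold)
  finally show ?thesis .
qed

(* Partitioning all increasing triples by the gcd: the counts of primitive triples satisfy
   sum_{d | n} (n / d) |C 1 d| = n(n-1)(n-2)/6. *)
lemma increasing_triples_divisor_sum:
  assumes "n > 0"
  shows "(\<Sum>d | d dvd n. real (n div d) * real (card (gcd_triples 1 d)))
         = real n * (real n - 1) * (real n - 2) / 6"
proof -
  have "increasing_triples n = (\<Union>g\<in>{g. g dvd n}. gcd_triples g n)"
    by (auto simp: gcd_triples_def)
  also have "card \<dots> = (\<Sum>g | g dvd n. card (gcd_triples g n))"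
  proof (rule card_UN_disjoint)
    show "finite {g. g dvd n}" using assms by simp
    show "\<forall>g\<in>{g. g dvd n}. finite (gcd_triples g n)"
      by (simp add: finite_gcd_triples)
  qed (auto simp: gcd_triples_def)
  also have "\<dots> = (\<Sum>g | g dvd n. g * card (gcd_triples 1 (n div g)))"
    using assms by (intro sum.cong refl) (auto elim!: dvdE simp: card_gcd_triples_scale)
  also have "\<dots> = (\<Sum>d | d dvd n. n div d * card (gcd_triples 1 d))"
    using assms by (intro sum.reindex_bij_witness[of _ "(div) n" "(div) n"]) (auto elim: dvdE)
  finally show ?thesis
    using card_increasing_triples[of n] by (simp flip: of_nat_mult of_nat_sum)
qed

(* The claimed value of |C 1 d|, including the correction for d = 1 (where |C 1 1| = 0). *)
definition primitive_triples_formula :: "nat \<Rightarrow> real" where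
  "primitive_triples_formula d = real d / 6 * jordan_totient 2 d - real d / 2 * jordan_totient 1 d
     + (if d = 1 then 1 / 3 else 0)"

lemma primitive_triples_formula_divisor_sum:
  assumes "n > 0"
  shows "(\<Sum>d | d dvd n. real (n div d) * primitive_triples_formula d)
         = real n * (real n - 1) * (real n - 2) / 6"
proof -
  have "(\<Sum>d | d dvd n. real (n div d) * primitive_triples_formula d) =
        (\<Sum>d | d dvd n. real n / 6 * jordan_totient 2 d - real n / 2 * jordan_totient 1 d
           + (if d = 1 then real n / 3 else 0))"
  proof (rule sum.cong)
    fix d assume "d \<in> {d. d dvd n}"
    then obtain q where "n = d * q" by (auto elim: dvdE)
    moreover have "d > 0" using \<open>n = d * q\<close> assms by (cases d) auto
    ultimately show "real (n div d) * primitive_triples_formula d = real n / 6 * jordan_totient 2 d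
        - real n / 2 * jordan_totient 1 d + (if d = 1 then real n / 3 else 0)"
      by (simp add: primitive_triples_formula_def algebra_simps)
  qed simp
  also have "\<dots> = real n / 6 * (\<Sum>d | d dvd n. jordan_totient 2 d)
      - real n / 2 * (\<Sum>d | d dvd n. jordan_totient 1 d) + real n / 3"
    using assms by (simp add: sum.distrib sum_subtractf sum_distrib_left)
  also have "\<dots> = real n / 6 * real n ^ 2 - real n / 2 * real n + real n / 3"
    using assms by (simp add: jordan_totient_divisor_sum)
  finally show ?thesis by (simp add: power2_eq_square field_simps)
qed

theorem mainTheorem5:
  fixes n :: nat
  assumes "n > 2"
  shows "real (card {(x::nat, y::nat, z::nat).
            x \<in> {1..n} \<and> y \<in> {1..n} \<and> z \<in> {1..n} \<and> x < y \<and> y < z \<and>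
            gcd (gcd (y - x) (z - y)) n = 1})
         = real n / 6 * jordan_totient 2 n - real n / 2 * jordan_totient 1 n"
proof -
  have "real (card (gcd_triples 1 n)) = primitive_triples_formula n"
  proof (rule divisor_convolution_cancel[where h = real])
    fix m :: nat assume "m > 0"
    then show "(\<Sum>d | d dvd m. real (m div d) * real (card (gcd_triples 1 d))) =
               (\<Sum>d | d dvd m. real (m div d) * primitive_triples_formula d)"
      by (simp only: increasing_triples_divisor_sum primitive_triples_formula_divisor_sum)
  qed (use assms in simp_all)
  moreover have "{(x, y, z). x \<in> {1..n} \<and> y \<in> {1..n} \<and> z \<in> {1..n} \<and> x < y \<and> y < z \<and>
            gcd (gcd (y - x) (z - y)) n = 1} = gcd_triples 1 n"
    by (auto simp: gcd_triples_def increasing_triples_def)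
  ultimately show ?thesis using assms by (simp add: primitive_triples_formula_def)
qed

end
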